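(* Let $f=(A,B,C)$ be a partially reduced imaginary or unusual binary quadratic form over $\mathbb{F}_q[t]$ and suppose $f=f\circ M$ for some $M\in GL_2(\mathbb{F}_q[t])$. If $|A|<|C|$, then $M=\pm I$, or $M=\pm J$ with $J=\begin{pmatrix}1&0\\0&-1\end{pmatrix}$, the latter only if $B=0$. If $|A|=|C|$, then $M=\begin{pmatrix}\alpha&\beta\\ -u\lambda\beta& u\alpha\end{pmatrix}$ with $\alpha,\beta\in\mathbb{F}_q$, $\lambda=-4/h$ and $u=\det M=\pm1$. Moreover, if $\beta\ne0$ then $B\neq0$ and $\alpha=u\beta(C\lambda-A)/B\in\mathbb{F}_q$. Consequently such automorphisms with $\beta\neq 0$ exist if and only if $((C\lambda-A)/B)^2+\lambda$ is a square in $\mathbb{F}_q^*$ (with $(C\lambda-A)/B\in\mathbb{F}_q$), in which case there are exactly two of them.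
   Context: $\mathbb{F}_q$ is a finite field with $\gcd(q,6)=1$; $|H|=q^{\deg H}$ for nonzero $H\in\mathbb{F}_q[t]$, $|0|=0$, $\mathrm{sgn}(H)$ = leading coefficient. A binary quadratic form $f=(A,B,C)$ is $Ax^2+Bxy+Cy^2$ over $\mathbb{F}_q[t]$ with discriminant $D=B^2-4AC$; $(f\circ M)(x,y)=f(\alpha x+\beta y,\gamma x+\delta y)$; $GL_2(\mathbb{F}_q[t])$ = matrices over $\mathbb{F}_q[t]$ with determinant in $\mathbb{F}_q^*$. $D$ is imaginary if $\deg D$ odd, unusual if $\deg D$ even and $\mathrm{sgn}(D)$ a non-square in $\mathbb{F}_q^*$. Fix a primitive root $h$ of $\mathbb{F}_q^*$, $S=\{h^i:0\le i\le (q-3)/2\}$. Standing assumptions: forms are primitive, irreducible, $D\notin\mathbb{F}_q$, $\mathrm{sgn}(D)\in\{1,h\}$. A form $(A,B,C)$ is partially reduced if $|B|<|A|\le|C|$; if $|A|<|C|$ then $\mathrm{sgn}(A)\in\{1,h\}$, if $|A|=|C|$ then $\mathrm{sgn}(A)=1$; and $B\ne0$ implies $\mathrm{sgn}(B)\in S$. *)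

theory Defs
  imports "HOL-Computational_Algebra.Computational_Algebra"
begin

text \<open>Binary quadratic forms (A,B,C) over F_q[t] and 2x2 matrices (alpha,beta,gamma,delta)
  = [[alpha,beta],[gamma,delta]] over F_q[t].\<close>

type_synonym 'a bqf = "'a poly \<times> 'a poly \<times> 'a poly"
type_synonym 'a mat2 = "'a poly \<times> 'a poly \<times> 'a poly \<times> 'a poly"

definition pabs :: "'a::{field,finite} poly \<Rightarrow> nat" where
  "pabs H = (if H = 0 then 0 else card (UNIV :: 'a set) ^ degree H)"

definition disc :: "'a::field bqf \<Rightarrow> 'a poly" where
  "disc f = (case f of (A, B, C) \<Rightarrow> B^2 - 4 * A * C)"

definition mdet :: "'a::field mat2 \<Rightarrow> 'a poly" where
  "mdet M = (case M of (a, b, c, d) \<Rightarrow> a * d - b * c)"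

definition inGL2 :: "'a::field mat2 \<Rightarrow> bool" where
  "inGL2 M \<longleftrightarrow> mdet M \<noteq> 0 \<and> degree (mdet M) = 0"

text \<open>(f o M)(x,y) = f(alpha x + beta y, gamma x + delta y), written via its coefficients.\<close>
definition form_comp :: "'a::field bqf \<Rightarrow> 'a mat2 \<Rightarrow> 'a bqf" where
  "form_comp f M = (case f of (A, B, C) \<Rightarrow> case M of (a, b, c, d) \<Rightarrow>
     (A * a^2 + B * a * c + C * c^2,
      2 * A * a * b + B * (a * d + b * c) + 2 * C * c * d,
      A * b^2 + B * b * d + C * d^2))"

definition primitive_root :: "'a::field \<Rightarrow> bool" where
  "primitive_root h \<longleftrightarrow> (\<forall>x. x \<noteq> 0 \<longrightarrow> (\<exists>i::nat. x = h ^ i))"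

definition Sset :: "'a::{field,finite} \<Rightarrow> 'a set" where
  "Sset h = {h ^ i | i. i \<le> (card (UNIV :: 'a set) - 3) div 2}"

definition imaginary :: "'a::field poly \<Rightarrow> bool" where
  "imaginary D \<longleftrightarrow> odd (degree D)"

definition unusual :: "'a::field poly \<Rightarrow> bool" where
  "unusual D \<longleftrightarrow> even (degree D) \<and> \<not> (\<exists>s. s \<noteq> 0 \<and> lead_coeff D = s^2)"

definition primitive_form :: "'a::field_gcd bqf \<Rightarrow> bool" where
  "primitive_form f = (case f of (A, B, C) \<Rightarrow> gcd A (gcd B C) = 1)"

definition irreducible_form :: "'a::field bqf \<Rightarrow> bool" where
  "irreducible_form f \<longleftrightarrow> \<not> (\<exists>P. disc f = P^2)"

definition standing :: "'a::field_gcd \<Rightarrow> 'a bqf \<Rightarrow> bool" where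
  "standing h f \<longleftrightarrow> primitive_form f \<and> irreducible_form f \<and> degree (disc f) \<ge> 1
     \<and> lead_coeff (disc f) \<in> {1, h}"

definition partially_reduced :: "'a::{field,finite} \<Rightarrow> 'a bqf \<Rightarrow> bool" where
  "partially_reduced h f = (case f of (A, B, C) \<Rightarrow>
     pabs B < pabs A \<and> pabs A \<le> pabs C
     \<and> (pabs A < pabs C \<longrightarrow> lead_coeff A \<in> {1, h})
     \<and> (pabs A = pabs C \<longrightarrow> lead_coeff A = 1)
     \<and> (B \<noteq> 0 \<longrightarrow> lead_coeff B \<in> Sset h))"

end

theory Submission
  imports Defs "HOL-Library.Disjoint_Sets" "HOL-Library.Z2"
begin

(*
  The proof rests on one degree estimate.  Under the hypotheses, deg B < deg A <= deg C and the
  leading terms of A x^2 and C y^2 can never cancel (for even deg A + deg C this is exactly the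
  statement that -lc(A) lc(C), hence lc(D) = -4 lc(A) lc(C), is not a square); we call such a
  form "leading-anisotropic".  Consequently deg f(x, y) = max(deg A + 2 deg x, deg C + 2 deg y).
  Reading the automorphism equations f(a, c) = A and f(b, d) = C through this estimate:
  - if deg A < deg C, then c = 0, a = +-1, and the middle equation forces b = 0, d = +-1;
  - if deg A = deg C, all entries are constants; comparing top coefficients shows that the
    columns are orthonormal for x^2 + lc(C) y^2, which gives the shape of M, and comparing all
    coefficients of the first equation gives the relation alpha B = u beta (lambda C - A).
  For beta <> 0 the middle equation forces det M = -1, so these automorphisms are exactly the
  "reflections" (a, b, lambda b, -a) satisfying a B = -b (lambda C - A) and a^2 + lambda b^2 = 1;
  solving for them explicitly gives the existence criterion and the count 2.
  Finally the paper's hypotheses (partially reduced, standing, imaginary or unusual, q coprime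
  to 6) are shown to supply leading-anisotropy and, when |A| = |C|, the normalisations
  lc(A) = 1, lambda lc(C) = 1 with lambda = -4/h, and deg C >= 1.
*)

(* Fields of characteristic 2 have even order: x |-> x + 1 is a fixed-point-free involution. *)
lemma two_neq_zero_if_coprime_card_6:
  assumes "coprime (card (UNIV :: 'a::{field,finite} set)) (6::nat)"
  shows "(2::'a) \<noteq> 0"
proof
  assume two: "(2::'a) = 0"
  have "(\<Sum>x\<in>(UNIV :: 'a set). (1::bit)) = 0"
  proof (rule sum_involution_eq_0[where h = "\<lambda>x. x + 1"])
    fix x :: 'a
    show "x + 1 + 1 = x" using two by (metis add.assoc add.right_neutral one_add_one)
  qed simp_all
  hence "even (card (UNIV :: 'a set))" by (metis even_of_nat_iff even_zero sum_constant mult_1_right)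
  moreover have "(2::nat) dvd 6" by simp
  ultimately show False using assms coprime_common_divisor[of "card (UNIV::'a set)" 6 2] by simp
qed

lemma pabs_less_iff:
  fixes X Y :: "'a::{field,finite} poly"
  shows "pabs X < pabs Y \<longleftrightarrow> Y \<noteq> 0 \<and> (X = 0 \<or> degree X < degree Y)"
proof -
  have "card {0::'a, 1} \<le> card (UNIV :: 'a set)" by (rule card_mono) auto
  hence q: "1 < card (UNIV :: 'a set)" by simp
  show ?thesis using power_strict_increasing_iff[OF q] q by (auto simp: pabs_def)
qed

lemma pabs_eq_iff:
  fixes X Y :: "'a::{field,finite} poly"
  assumes "X \<noteq> 0" and "Y \<noteq> 0"
  shows "pabs X = pabs Y \<longleftrightarrow> degree X = degree Y"
  using pabs_less_iff[of X Y] pabs_less_iff[of Y X] assms by (metis linorder_neqE_nat nat_neq_iff)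

lemma degree_add_no_cancel:
  fixes p q :: "'a::comm_ring_1 poly"
  assumes p: "p \<noteq> 0" and q: "q \<noteq> 0"
    and no_cancel: "degree p = degree q \<Longrightarrow> lead_coeff p + lead_coeff q \<noteq> 0"
  shows "p + q \<noteq> 0 \<and> degree (p + q) = max (degree p) (degree q)"
proof (cases "degree p" "degree q" rule: linorder_cases)
  case less
  hence "degree (p + q) = degree q" by (rule degree_add_eq_right)
  with less show ?thesis by auto
next
  case equal
  hence top: "coeff (p + q) (degree p) \<noteq> 0" using no_cancel by simp
  hence "degree p \<le> degree (p + q)" by (rule le_degree)
  moreover have "degree (p + q) \<le> degree p" using equal by (intro degree_add_le) auto
  moreover have "p + q \<noteq> 0" using top by (metis coeff_0)
  ultimately show ?thesis using equal by auto
next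
  case greater
  hence "degree (p + q) = degree p" by (rule degree_add_eq_left)
  with greater show ?thesis by auto
qed

definition form_value :: "'a::field bqf \<Rightarrow> 'a poly \<Rightarrow> 'a poly \<Rightarrow> 'a poly" where
  "form_value f x y = (case f of (A, B, C) \<Rightarrow> A * x^2 + B * x * y + C * y^2)"

lemma form_comp_eq:
  "form_comp (A, B, C) (a, b, c, d) =
     (form_value (A, B, C) a c, 2 * A * a * b + B * (a * d + b * c) + 2 * C * c * d,
      form_value (A, B, C) b d)"
  by (simp add: form_comp_def form_value_def)

definition leading_anisotropic :: "'a::field bqf \<Rightarrow> bool" where
  "leading_anisotropic f = (case f of (A, B, C) \<Rightarrow>
     A \<noteq> 0 \<and> C \<noteq> 0 \<and> (B = 0 \<or> degree B < degree A) \<and> degree A \<le> degree C \<and>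
     (even (degree A + degree C) \<longrightarrow>
        \<not> (\<exists>s. s \<noteq> 0 \<and> - (lead_coeff A * lead_coeff C) = s^2)))"

lemma diagonal_value_degree:
  fixes A B C x y :: "'a::field poly"
  assumes f: "leading_anisotropic (A, B, C)" and x: "x \<noteq> 0" and y: "y \<noteq> 0"
  shows "A * x^2 + C * y^2 \<noteq> 0 \<and>
         degree (A * x^2 + C * y^2) = max (degree A + 2 * degree x) (degree C + 2 * degree y)"
proof -
  have A: "A \<noteq> 0" and C: "C \<noteq> 0"
    and nsq: "even (degree A + degree C) \<Longrightarrow> \<not> (\<exists>s. s \<noteq> 0 \<and> - (lead_coeff A * lead_coeff C) = s^2)"
    using f by (auto simp: leading_anisotropic_def)
  have P: "A * x^2 \<noteq> 0" "degree (A * x^2) = degree A + 2 * degree x"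
    using A x by (simp_all add: degree_mult_eq degree_power_eq)
  have R: "C * y^2 \<noteq> 0" "degree (C * y^2) = degree C + 2 * degree y"
    using C y by (simp_all add: degree_mult_eq degree_power_eq)
  show ?thesis unfolding P(2)[symmetric] R(2)[symmetric]
  proof (rule degree_add_no_cancel[OF P(1) R(1)])
    txt \<open>Cancellation would make \<open>-lc(A) lc(C)\<close> the nonzero square \<open>(lc(C) lc(y) / lc(x))\<^sup>2\<close>.\<close>
    assume deg: "degree (A * x^2) = degree (C * y^2)"
    show "lead_coeff (A * x^2) + lead_coeff (C * y^2) \<noteq> 0"
    proof
      assume "lead_coeff (A * x^2) + lead_coeff (C * y^2) = 0"
      hence "lead_coeff A * lead_coeff x ^ 2 + lead_coeff C * lead_coeff y ^ 2 = 0"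
        by (simp add: lead_coeff_mult lead_coeff_power)
      hence "- (lead_coeff A * lead_coeff C) * lead_coeff x ^ 2 = (lead_coeff C * lead_coeff y)^2"
        by algebra
      hence "- (lead_coeff A * lead_coeff C) = (lead_coeff C * lead_coeff y / lead_coeff x)^2"
        using x by (simp add: field_simps)
      moreover have "lead_coeff C * lead_coeff y / lead_coeff x \<noteq> 0" using C x y by simp
      moreover have "even (degree A + degree C)" using deg P(2) R(2) by presburger
      ultimately show False using nsq by blast
    qed
  qed
qed

lemma form_value_degree:
  fixes A B C x y :: "'a::field poly"
  assumes f: "leading_anisotropic (A, B, C)" and x: "x \<noteq> 0" and y: "y \<noteq> 0"
  shows "form_value (A, B, C) x y \<noteq> 0 \<and>
         degree (form_value (A, B, C) x y) = max (degree A + 2 * degree x) (degree C + 2 * degree y)"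
proof -
  have Bd: "B = 0 \<or> degree B < degree A" and AC: "degree A \<le> degree C"
    using f by (auto simp: leading_anisotropic_def)
  note diag = diagonal_value_degree[OF f x y]
  have split_value: "form_value (A, B, C) x y = (A * x^2 + C * y^2) + B * x * y"
    unfolding form_value_def by simp
  show ?thesis
  proof (cases "B = 0")
    case False
    hence "degree (B * x * y) = degree B + degree x + degree y" using x y by (simp add: degree_mult_eq)
    hence lt: "degree (B * x * y) < degree (A * x^2 + C * y^2)" using Bd False AC diag by auto
    hence deg: "degree (A * x^2 + C * y^2 + B * x * y) = degree (A * x^2 + C * y^2)"
      by (rule degree_add_eq_left)
    moreover have "A * x^2 + C * y^2 + B * x * y \<noteq> 0" using deg lt by auto
    ultimately show ?thesis unfolding split_value using diag by simp
  next
    case True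
    thus ?thesis unfolding split_value using diag by simp
  qed
qed

lemma form_value_degree_lower:
  fixes A B C x y :: "'a::field poly"
  assumes f: "leading_anisotropic (A, B, C)"
  shows "x \<noteq> 0 \<Longrightarrow> degree A + 2 * degree x \<le> degree (form_value (A, B, C) x y)"
    and "y \<noteq> 0 \<Longrightarrow> degree C + 2 * degree y \<le> degree (form_value (A, B, C) x y)"
proof -
  have A: "A \<noteq> 0" "degree A \<le> degree C" and C: "C \<noteq> 0"
    using f by (auto simp: leading_anisotropic_def)
  show "x \<noteq> 0 \<Longrightarrow> degree A + 2 * degree x \<le> degree (form_value (A, B, C) x y)"
    using form_value_degree[OF f, of x y] A
    by (cases "y = 0") (auto simp: form_value_def degree_mult_eq degree_power_eq)
  show "y \<noteq> 0 \<Longrightarrow> degree C + 2 * degree y \<le> degree (form_value (A, B, C) x y)"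
    using form_value_degree[OF f, of x y] C
    by (cases "x = 0") (auto simp: form_value_def degree_mult_eq degree_power_eq)
qed

lemma automorphisms_unequal_degrees:
  fixes A B C :: "'a::field poly"
  assumes f: "leading_anisotropic (A, B, C)" and AC: "degree A < degree C"
    and two: "(2::'a) \<noteq> 0"
    and GL: "inGL2 M" and aut: "form_comp (A, B, C) M = (A, B, C)"
  shows "M = (1, 0, 0, 1) \<or> M = (-1, 0, 0, -1) \<or>
         ((M = (1, 0, 0, -1) \<or> M = (-1, 0, 0, 1)) \<and> B = 0)"
proof -
  obtain a b c d where M: "M = (a, b, c, d)" by (cases M) auto
  have A: "A \<noteq> 0" and C: "C \<noteq> 0" and Bd: "B = 0 \<or> degree B < degree A"
    using f by (auto simp: leading_anisotropic_def)
  have E1: "form_value (A, B, C) a c = A"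
    and E2: "2 * A * a * b + B * (a * d + b * c) + 2 * C * c * d = B"
    and E3: "form_value (A, B, C) b d = C"
    using aut unfolding M form_comp_eq by auto
  txt \<open>A nonzero \<open>c\<close> would push the degree of \<open>f(a, c) = A\<close> up to at least \<open>deg C\<close>.\<close>
  have c: "c = 0" using form_value_degree_lower(2)[OF f, of c a] E1 AC by (cases "c = 0") auto
  have "A * (a^2 - 1) = 0" using E1 c by (simp add: form_value_def algebra_simps)
  hence a: "a = 1 \<or> a = -1" using A by (simp add: power2_eq_1_iff)
  have "degree (a * d) = 0" using GL unfolding M c inGL2_def mdet_def by simp
  txt \<open>With \<open>c = 0\<close> the middle equation reads \<open>2 a b A = (1 - a d) B\<close>, whose right side
    has degree below \<open>deg A\<close>; hence \<open>b = 0\<close>.\<close>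
  have b: "b = 0"
  proof (rule ccontr)
    assume b: "b \<noteq> 0"
    have eq: "smult 2 (a * b * A) = B * (1 - a * d)" using E2 c
      by (simp add: algebra_simps numeral_poly)
    have "smult 2 (a * b * A) \<noteq> 0" "degree A \<le> degree (smult 2 (a * b * A))"
      using two A a b by (auto simp: degree_mult_eq)
    moreover have "degree (B * (1 - a * d)) \<le> degree B"
      using degree_mult_le[of B "1 - a * d"] degree_diff_le[of 1 0 "a * d"] \<open>degree (a * d) = 0\<close>
      by simp
    ultimately show False using eq Bd by (metis leD mult_zero_left order.strict_trans2)
  qed
  have "C * (d^2 - 1) = 0" using E3 b by (simp add: form_value_def algebra_simps)
  hence d: "d = 1 \<or> d = -1" using C by (simp add: power2_eq_1_iff)
  have "B * (a * d - 1) = 0" using E2 b c by (simp add: algebra_simps)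
  moreover have "(2::'a poly) \<noteq> 0" using two by (simp add: numeral_poly)
  ultimately show ?thesis using a d unfolding M b c by (auto simp: numeral_poly)
qed

lemma automorphism_entries_constant:
  fixes A B C :: "'a::field poly"
  assumes f: "leading_anisotropic (A, B, C)" and AC: "degree A = degree C"
    and aut: "form_comp (A, B, C) (a, b, c, d) = (A, B, C)"
  shows "degree a = 0 \<and> degree b = 0 \<and> degree c = 0 \<and> degree d = 0"
proof -
  have E1: "form_value (A, B, C) a c = A" and E3: "form_value (A, B, C) b d = C"
    using aut unfolding form_comp_eq by auto
  have "degree a = 0" using form_value_degree_lower(1)[OF f, of a c] E1 by (cases "a = 0") auto
  moreover have "degree c = 0" using form_value_degree_lower(2)[OF f, of c a] E1 AC by (cases "c = 0") auto
  moreover have "degree b = 0" using form_value_degree_lower(1)[OF f, of b d] E3 AC by (cases "b = 0") auto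
  moreover have "degree d = 0" using form_value_degree_lower(2)[OF f, of d b] E3 by (cases "d = 0") auto
  ultimately show ?thesis by simp
qed

lemma form_comp_const:
  "form_comp (A, B, C) ([:a:], [:b:], [:c:], [:d:]) =
     (smult (a^2) A + smult (a * c) B + smult (c^2) C,
      smult (2 * a * b) A + smult (a * d + b * c) B + smult (2 * c * d) C,
      smult (b^2) A + smult (b * d) B + smult (d^2) C)"
  by (simp add: form_comp_def power2_eq_square algebra_simps numeral_poly smult_add_left)

lemma constant_automorphism_coeffs:
  fixes A B C :: "'a::field poly"
  assumes "form_comp (A, B, C) ([:a:], [:b:], [:c:], [:d:]) = (A, B, C)"
  shows "a^2 * coeff A k + a * c * coeff B k + c^2 * coeff C k = coeff A k"
    and "2 * a * b * coeff A k + (a * d + b * c) * coeff B k + 2 * c * d * coeff C k = coeff B k"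
    and "b^2 * coeff A k + b * d * coeff B k + d^2 * coeff C k = coeff C k"
  using assms unfolding form_comp_const by (auto dest!: arg_cong[where f = "\<lambda>p. coeff p k"])

(* Top coefficients (degree deg A = deg C > deg B): the columns of a constant automorphism are
   orthonormal for the quadratic form x^2 + lc(C) y^2. *)
lemma constant_automorphism_orthonormal:
  fixes A B C :: "'a::field poly"
  assumes Bd: "B = 0 \<or> degree B < degree A" and AC: "degree A = degree C"
    and two: "(2::'a) \<noteq> 0" and lA: "lead_coeff A = 1"
    and aut: "form_comp (A, B, C) ([:a:], [:b:], [:c:], [:d:]) = (A, B, C)"
  shows "a^2 + lead_coeff C * c^2 = 1" and "a * b + lead_coeff C * c * d = 0"
    and "b^2 + lead_coeff C * d^2 = lead_coeff C"
proof -
  define n where "n = degree A"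
  have top: "coeff A n = 1" "coeff B n = 0" "coeff C n = lead_coeff C"
    using lA Bd AC unfolding n_def by (auto simp: coeff_eq_0)
  note E = constant_automorphism_coeffs[OF aut, of n, unfolded top]
  show "a^2 + lead_coeff C * c^2 = 1" using E(1) by (simp add: mult.commute)
  show "b^2 + lead_coeff C * d^2 = lead_coeff C" using E(3) by (simp add: mult.commute)
  have "2 * (a * b + lead_coeff C * c * d) = 0" using E(2) by (simp add: algebra_simps)
  thus "a * b + lead_coeff C * c * d = 0" using two by (metis mult_eq_0_iff)
qed

lemma constant_automorphism_shape:
  fixes A B C :: "'a::field poly"
  assumes Bd: "B = 0 \<or> degree B < degree A" and AC: "degree A = degree C"
    and two: "(2::'a) \<noteq> 0" and lA: "lead_coeff A = 1" and lam: "lam * lead_coeff C = 1"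
    and aut: "form_comp (A, B, C) ([:a:], [:b:], [:c:], [:d:]) = (A, B, C)"
  defines "u \<equiv> a * d - b * c"
  shows "u = 1 \<or> u = -1" and "d = u * a" and "c = - u * lam * b"
    and "b \<noteq> 0 \<Longrightarrow> smult a B = smult (u * b) (smult lam C - A)"
proof -
  define \<mu> where "\<mu> = lead_coeff C"
  note K = constant_automorphism_orthonormal[OF Bd AC two lA aut, folded \<mu>_def]
  have lm: "lam * \<mu> = 1" using lam unfolding \<mu>_def .
  txt \<open>Orthonormal columns: \<open>\<mu> det(M)\<^sup>2 = \<mu>\<close>, and the second column is \<open>u\<close> times the
    rotated first one.\<close>
  have "\<mu> * u^2 = \<mu> * 1" using K unfolding u_def by algebra
  hence u2: "u^2 = 1" using lm by auto
  thus "u = 1 \<or> u = -1" by (simp add: power2_eq_1_iff)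
  show d: "d = u * a" using K(1,2) unfolding u_def by algebra
  show c: "c = - u * lam * b" using K(2,3) lm unfolding u_def by algebra
  txt \<open>For \<open>b \<noteq> 0\<close>, substituting into the first equation leaves
    \<open>\<lambda> b (\<lambda> b C - b A - u a B) = 0\<close>.\<close>
  show "smult a B = smult (u * b) (smult lam C - A)" if b: "b \<noteq> 0"
  proof (rule poly_eqI)
    fix k
    have lam0: "lam \<noteq> 0" using lm by auto
    have c2: "c^2 = lam^2 * b^2" using u2 unfolding c by (simp add: power_mult_distrib)
    have "\<mu> * c^2 = lam * b^2" unfolding c2 using lm by (simp add: power2_eq_square algebra_simps)
    hence a2: "a^2 = 1 - lam * b^2" using K(1) by (simp add: algebra_simps)
    have "(1 - lam * b^2) * coeff A k + a * (- u * lam * b) * coeff B k + lam^2 * b^2 * coeff C k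
          = coeff A k"
      using constant_automorphism_coeffs(1)[OF aut, of k] unfolding a2 c2 by (simp add: c)
    hence "lam * b * (lam * b * coeff C k - b * coeff A k - u * a * coeff B k) = 0"
      by (simp add: algebra_simps power2_eq_square)
    hence "lam * b * coeff C k - b * coeff A k - u * a * coeff B k = 0" using lam0 b by simp
    hence "u * a * coeff B k = b * (lam * coeff C k - coeff A k)" by (simp add: algebra_simps)
    hence "a * coeff B k = u * b * (lam * coeff C k - coeff A k)"
      using u2 by (metis mult.assoc mult_1 power2_eq_square)
    thus "coeff (smult a B) k = coeff (smult (u * b) (smult lam C - A)) k"
      by (simp add: algebra_simps)
  qed
qed

(* An automorphism with beta <> 0 has determinant -1: compare the coefficients of degree deg B
   in the middle equation. *)
lemma automorphism_det_minus_one: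
  fixes A B C :: "'a::field poly"
  assumes u: "u = 1 \<or> u = -1" and B: "B \<noteq> 0"
    and rel: "smult a B = smult (u * b) (smult lam C - A)" and norm: "a^2 + lam * b^2 = 1"
    and aut: "form_comp (A, B, C) ([:a:], [:b:], [:- u * lam * b:], [:u * a:]) = (A, B, C)"
  shows "u = -1"
proof -
  define k where "k = degree B"
  have u2: "u^2 = 1" using u by auto
  have rk: "a * coeff B k = u * b * (lam * coeff C k - coeff A k)"
    using arg_cong[OF rel, of "\<lambda>p. coeff p k"] by (simp add: algebra_simps)
  note mid = constant_automorphism_coeffs(2)[OF aut, of k]
  have "(u + 1) * coeff B k = 0" using u2 rk mid norm by algebra
  thus "u = -1" using B k_def by (simp add: add_eq_0_iff2)
qed

(* The matrix (a, b, lambda b, -a); the automorphisms with beta <> 0 turn out to be of this form. *)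
definition reflection :: "'a::field \<Rightarrow> 'a \<Rightarrow> 'a \<Rightarrow> 'a mat2" where
  "reflection lam a b = ([:a:], [:b:], [:lam * b:], [:- a:])"

definition reflection_solutions :: "'a::field \<Rightarrow> 'a bqf \<Rightarrow> 'a mat2 set" where
  "reflection_solutions lam f = (case f of (A, B, C) \<Rightarrow>
     {reflection lam a b | a b. b \<noteq> 0 \<and> B \<noteq> 0 \<and>
        smult a B = smult (- b) (smult lam C - A) \<and> a^2 + lam * b^2 = 1})"

lemma reflection_automorphism:
  fixes A B C :: "'a::field poly"
  assumes rel: "smult a B = smult (- b) (smult lam C - A)" and norm: "a^2 + lam * b^2 = 1"
  shows "inGL2 (reflection lam a b) \<and> form_comp (A, B, C) (reflection lam a b) = (A, B, C)"
proof -
  have relk: "a * coeff B k = - b * (lam * coeff C k - coeff A k)" for k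
    using arg_cong[OF rel, of "\<lambda>p. coeff p k"] by simp
  have "mdet (reflection lam a b) = [:-1:]"
    using norm unfolding reflection_def mdet_def by (simp add: power2_eq_square algebra_simps)
  hence "inGL2 (reflection lam a b)" unfolding inGL2_def by simp
  moreover have "smult (a^2) A + smult (a * (lam * b)) B + smult ((lam * b)^2) C = A"
    apply (rule poly_eqI)
    subgoal for k unfolding coeff_add coeff_smult using relk[of k] norm by algebra
    done
  moreover have "smult (2 * a * b) A + smult (a * - a + b * (lam * b)) B + smult (2 * (lam * b) * - a) C = B"
    apply (rule poly_eqI)
    subgoal for k unfolding coeff_add coeff_smult using relk[of k] norm by algebra
    done
  moreover have "smult (b^2) A + smult (b * - a) B + smult ((- a)^2) C = C"
    apply (rule poly_eqI)
    subgoal for k unfolding coeff_add coeff_smult using relk[of k] norm by algebra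
    done
  ultimately show ?thesis unfolding reflection_def form_comp_const by simp
qed

lemma smult_proportional_iff:
  fixes B :: "'a::field poly"
  assumes B: "B \<noteq> 0"
  shows "smult a B = smult (- b) (smult c B) \<longleftrightarrow> a = - c * b"
proof -
  have "smult a B = smult (- b) (smult c B) \<longleftrightarrow> smult (a + c * b) B = 0"
    by (simp add: smult_add_left eq_neg_iff_add_eq_0 mult.commute)
  thus ?thesis using B by (simp add: eq_neg_iff_add_eq_0)
qed

(* Solving the conditions: once lambda C - A = c B with B <> 0, they say a = -c b and
   (c^2 + lambda) b^2 = 1, so for c^2 + lambda = s^2 there are exactly the solutions b = +-1/s. *)
lemma reflection_solutions_explicit:
  fixes A B C :: "'a::field poly"
  assumes B: "B \<noteq> 0" and c: "smult lam C - A = smult c B" and s: "s \<noteq> 0"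
    and cs: "c^2 + lam = s^2"
  shows "reflection_solutions lam (A, B, C) =
           {reflection lam (- c * (1 / s)) (1 / s), reflection lam (- c * (- 1 / s)) (- 1 / s)}"
proof -
  have "M \<in> reflection_solutions lam (A, B, C) \<longleftrightarrow>
          (\<exists>b. (b = 1 / s \<or> b = - 1 / s) \<and> M = reflection lam (- c * b) b)" for M
  proof -
    have "(smult a B = smult (- b) (smult lam C - A)) \<longleftrightarrow> a = - c * b" for a b
      unfolding c by (rule smult_proportional_iff[OF B])
    moreover have "(b \<noteq> 0 \<and> (- c * b)^2 + lam * b^2 = 1) \<longleftrightarrow> (b = 1 / s \<or> b = - 1 / s)" for b
    proof -
      have "(- c * b)^2 + lam * b^2 = (b * s)^2" using cs by algebra
      hence "(b \<noteq> 0 \<and> (- c * b)^2 + lam * b^2 = 1) \<longleftrightarrow> (b * s)^2 = 1" by auto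
      also have "\<dots> \<longleftrightarrow> b * s = 1 \<or> b * s = - 1" by (rule power2_eq_1_iff)
      also have "\<dots> \<longleftrightarrow> b = 1 / s \<or> b = - 1 / s" using s by (auto simp: field_simps)
      finally show ?thesis .
    qed
    ultimately show ?thesis unfolding reflection_solutions_def using B by auto
  qed
  thus ?thesis by blast
qed

lemma reflection_solutions_nonempty_iff:
  fixes A B C :: "'a::field poly"
  shows "reflection_solutions lam (A, B, C) \<noteq> {} \<longleftrightarrow>
           B \<noteq> 0 \<and> (\<exists>c. smult lam C - A = smult c B \<and> (\<exists>s. s \<noteq> 0 \<and> c^2 + lam = s^2))"
proof
  assume "reflection_solutions lam (A, B, C) \<noteq> {}"
  then obtain a b where b: "b \<noteq> 0" and B: "B \<noteq> 0"
    and rel: "smult a B = smult (- b) (smult lam C - A)" and norm: "a^2 + lam * b^2 = 1"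
    unfolding reflection_solutions_def by blast
  have "smult lam C - A = smult (- a / b) B"
    using arg_cong[OF rel, of "smult (- 1 / b)"] b by simp
  moreover have "(- a / b)^2 + lam = (1 / b)^2" using norm b by (simp add: field_simps)
  ultimately show "B \<noteq> 0 \<and> (\<exists>c. smult lam C - A = smult c B \<and> (\<exists>s. s \<noteq> 0 \<and> c^2 + lam = s^2))"
    using B b by (metis divide_eq_0_iff one_neq_zero)
next
  assume "B \<noteq> 0 \<and> (\<exists>c. smult lam C - A = smult c B \<and> (\<exists>s. s \<noteq> 0 \<and> c^2 + lam = s^2))"
  thus "reflection_solutions lam (A, B, C) \<noteq> {}" using reflection_solutions_explicit by blast
qed

(* In odd characteristic the two solutions b = 1/s and b = -1/s are distinct. *)
lemma reflection_solutions_card: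
  fixes A B C :: "'a::field poly"
  assumes two: "(2::'a) \<noteq> 0" and ne: "reflection_solutions lam (A, B, C) \<noteq> {}"
  shows "card (reflection_solutions lam (A, B, C)) = 2"
proof -
  obtain c s where B: "B \<noteq> 0" and c: "smult lam C - A = smult c B" and s: "s \<noteq> 0"
    and cs: "c^2 + lam = s^2"
    using ne reflection_solutions_nonempty_iff by blast
  have "1 / s \<noteq> - 1 / s" using two s by (simp add: field_simps)
  hence "reflection lam (- c * (1 / s)) (1 / s) \<noteq> reflection lam (- c * (- 1 / s)) (- 1 / s)"
    by (simp add: reflection_def)
  thus ?thesis unfolding reflection_solutions_explicit[OF B c s cs] by simp
qed

(* The case deg A = deg C, in the normalisation lc(A) = 1, lambda lc(C) = 1 provided by the
   paper's hypotheses. *)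
context
  fixes A B C :: "'a::field_gcd poly" and lam :: 'a
  assumes f: "leading_anisotropic (A, B, C)" and AC: "degree A = degree C"
    and two: "(2::'a) \<noteq> 0" and lA: "lead_coeff A = 1" and lam: "lam * lead_coeff C = 1"
    and prim: "gcd A (gcd B C) = 1" and dC: "degree C \<ge> 1"
begin

lemma automorphisms_equal_degrees:
  assumes aut: "form_comp (A, B, C) M = (A, B, C)"
  shows "\<exists>\<alpha> \<beta> u. (u = 1 \<or> u = -1) \<and> mdet M = [:u:] \<and>
           M = ([:\<alpha>:], [:\<beta>:], [:- u * lam * \<beta>:], [:u * \<alpha>:]) \<and>
           (\<beta> \<noteq> 0 \<longrightarrow> B \<noteq> 0 \<and> smult \<alpha> B = smult (u * \<beta>) (smult lam C - A))"
proof -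
  have Bd: "B = 0 \<or> degree B < degree A" using f by (simp add: leading_anisotropic_def)
  obtain \<alpha> \<beta> \<gamma> \<delta> where M: "M = ([:\<alpha>:], [:\<beta>:], [:\<gamma>:], [:\<delta>:])"
  proof -
    obtain a b c d where "M = (a, b, c, d)" by (cases M) auto
    with automorphism_entries_constant[OF f AC] aut that show ?thesis
      by (metis degree_0_id)
  qed
  define u where "u = \<alpha> * \<delta> - \<beta> * \<gamma>"
  note shape = constant_automorphism_shape[OF Bd AC two lA lam aut[unfolded M], folded u_def]
  txt \<open>If \<open>B = 0\<close>, the relation would make \<open>A\<close> a constant multiple of \<open>C\<close>, so the
    nonconstant \<open>C\<close> would divide \<open>gcd(A, B, C) = 1\<close>.\<close>
  have "B \<noteq> 0" if \<beta>: "\<beta> \<noteq> 0"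
  proof
    assume B: "B = 0"
    have "smult (u * \<beta>) (smult lam C - A) = 0" using shape(4)[OF \<beta>] B by simp
    moreover have "u * \<beta> \<noteq> 0" using shape(1) \<beta> by auto
    ultimately have "A = smult lam C" by simp
    hence "C dvd gcd A (gcd B C)" using B by (simp add: dvd_smult)
    moreover have "C \<noteq> 0" using f by (simp add: leading_anisotropic_def)
    ultimately show False using prim dC by (simp add: is_unit_iff_degree)
  qed
  moreover have "mdet M = [:u:]" unfolding M mdet_def u_def by simp
  ultimately show ?thesis using shape unfolding M by blast
qed

lemma reflection_automorphisms_iff:
  "(inGL2 M \<and> form_comp (A, B, C) M = (A, B, C) \<and> fst (snd M) \<noteq> 0) \<longleftrightarrow>
     M \<in> reflection_solutions lam (A, B, C)"
proof
  assume H: "inGL2 M \<and> form_comp (A, B, C) M = (A, B, C) \<and> fst (snd M) \<noteq> 0"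
  then obtain a b u where u: "u = 1 \<or> u = -1" and det: "mdet M = [:u:]"
    and M: "M = ([:a:], [:b:], [:- u * lam * b:], [:u * a:])"
    and rel: "b \<noteq> 0 \<longrightarrow> B \<noteq> 0 \<and> smult a B = smult (u * b) (smult lam C - A)"
    using automorphisms_equal_degrees by blast
  have b: "b \<noteq> 0" using H M by simp
  have B: "B \<noteq> 0" and r: "smult a B = smult (u * b) (smult lam C - A)" using rel b by auto
  have "[:u * (a^2 + lam * b^2):] = [:u:]" using det unfolding M mdet_def
    by (simp add: power2_eq_square algebra_simps)
  hence norm: "a^2 + lam * b^2 = 1" using u by auto
  have "u = -1" using automorphism_det_minus_one[OF u B r norm] H unfolding M by simp
  thus "M \<in> reflection_solutions lam (A, B, C)"
    using b B M r norm unfolding reflection_solutions_def reflection_def by auto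
next
  assume "M \<in> reflection_solutions lam (A, B, C)"
  then obtain a b where "b \<noteq> 0" "M = reflection lam a b"
    "smult a B = smult (- b) (smult lam C - A)" "a^2 + lam * b^2 = 1"
    unfolding reflection_solutions_def by blast
  thus "inGL2 M \<and> form_comp (A, B, C) M = (A, B, C) \<and> fst (snd M) \<noteq> 0"
    using reflection_automorphism[of a B b lam C A] by (simp add: reflection_def)
qed

lemma reflection_automorphisms_count:
  "let Aut = {M. inGL2 M \<and> form_comp (A, B, C) M = (A, B, C) \<and> fst (snd M) \<noteq> 0} in
     (Aut \<noteq> {} \<longleftrightarrow>
        B \<noteq> 0 \<and> (\<exists>c. smult lam C - A = smult c B \<and> (\<exists>s. s \<noteq> 0 \<and> c^2 + lam = s^2)))
     \<and> (Aut \<noteq> {} \<longrightarrow> card Aut = 2)"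
proof -
  have "{M. inGL2 M \<and> form_comp (A, B, C) M = (A, B, C) \<and> fst (snd M) \<noteq> 0} =
        reflection_solutions lam (A, B, C)"
    using reflection_automorphisms_iff by blast
  thus ?thesis
    using reflection_solutions_nonempty_iff reflection_solutions_card[OF two] unfolding Let_def
    by simp
qed

end

lemma disc_degree_lead:
  fixes A B C :: "'a::field poly"
  assumes A: "A \<noteq> 0" and C: "C \<noteq> 0" and Bd: "B = 0 \<or> degree B < degree A"
    and AC: "degree A \<le> degree C" and four: "(4::'a) \<noteq> 0"
  shows "degree (disc (A, B, C)) = degree A + degree C \<and>
         lead_coeff (disc (A, B, C)) = - 4 * (lead_coeff A * lead_coeff C)"
proof -
  define X where "X = smult (- 4) (A * C)"
  have D: "disc (A, B, C) = B^2 + X" unfolding disc_def X_def by (simp add: numeral_poly algebra_simps)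
  have dX: "degree X = degree A + degree C" unfolding X_def using four A C by (simp add: degree_mult_eq)
  have lX: "lead_coeff X = - 4 * (lead_coeff A * lead_coeff C)" unfolding X_def by (simp add: lead_coeff_mult)
  show ?thesis
  proof (cases "B = 0")
    case False
    hence "degree (B^2) < degree X" using Bd AC dX by (simp add: degree_power_eq)
    thus ?thesis unfolding D using dX lX degree_add_eq_right lead_coeff_add_le by metis
  next
    case True
    thus ?thesis unfolding D using dX lX by simp
  qed
qed

lemma partially_reduced_leading_anisotropic:
  fixes h :: "'a::{field,finite}" and A B C :: "'a poly"
  assumes two: "(2::'a) \<noteq> 0" and pr: "partially_reduced h (A, B, C)"
    and iu: "imaginary (disc (A, B, C)) \<or> unusual (disc (A, B, C))"
  shows "leading_anisotropic (A, B, C)"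
proof -
  have sizes: "pabs B < pabs A" "\<not> pabs C < pabs A" using pr by (auto simp: partially_reduced_def)
  hence A: "A \<noteq> 0" and Bd: "B = 0 \<or> degree B < degree A" and C: "C \<noteq> 0"
    and AC: "degree A \<le> degree C" by (auto simp: pabs_less_iff)
  have four: "(4::'a) \<noteq> 0" using two by (metis mult_eq_0_iff numeral_Bit0_eq_double)
  note D = disc_degree_lead[OF A C Bd AC four]
  txt \<open>For even degree the discriminant is unusual, and \<open>-lc(A) lc(C) = s\<^sup>2\<close> would make
    its leading coefficient \<open>-4 lc(A) lc(C) = (2 s)\<^sup>2\<close> a nonzero square.\<close>
  have "\<not> (\<exists>s. s \<noteq> 0 \<and> - (lead_coeff A * lead_coeff C) = s^2)" if ev: "even (degree A + degree C)"
  proof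
    assume "\<exists>s. s \<noteq> 0 \<and> - (lead_coeff A * lead_coeff C) = s^2"
    then obtain s where s: "s \<noteq> 0" "- (lead_coeff A * lead_coeff C) = s^2" by blast
    have "lead_coeff (disc (A, B, C)) = (2 * s)^2"
      using D s(2) by (simp add: power_mult_distrib) (metis mult_minus_right)
    moreover have "2 * s \<noteq> 0" using two s by simp
    moreover have "unusual (disc (A, B, C))" using iu ev D by (simp add: imaginary_def)
    ultimately show False unfolding unusual_def by blast
  qed
  thus ?thesis using A C Bd AC by (simp add: leading_anisotropic_def)
qed

lemma equal_size_normalization:
  fixes h :: "'a::{field_gcd,finite}" and A B C :: "'a poly"
  assumes two: "(2::'a) \<noteq> 0" and st: "standing h (A, B, C)" and f: "leading_anisotropic (A, B, C)"
    and pr: "partially_reduced h (A, B, C)" and iu: "imaginary (disc (A, B, C)) \<or> unusual (disc (A, B, C))"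
    and eq: "pabs A = pabs C"
  shows "degree A = degree C \<and> lead_coeff A = 1 \<and> (- 4 / h) * lead_coeff C = 1 \<and> degree C \<ge> 1"
proof -
  have A: "A \<noteq> 0" and C: "C \<noteq> 0" and Bd: "B = 0 \<or> degree B < degree A"
    using f by (auto simp: leading_anisotropic_def)
  have AC: "degree A = degree C" using eq pabs_eq_iff[OF A C] by simp
  have lA: "lead_coeff A = 1" using pr eq by (simp add: partially_reduced_def)
  have four: "(4::'a) \<noteq> 0" using two by (metis mult_eq_0_iff numeral_Bit0_eq_double)
  note D = disc_degree_lead[OF A C Bd eq_imp_le[OF AC] four]
  have dD: "degree (disc (A, B, C)) \<ge> 1" and lD: "lead_coeff (disc (A, B, C)) \<in> {1, h}"
    using st by (auto simp: standing_def)
  txt \<open>The discriminant has even degree, so it is unusual: its leading coefficient is the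
    non-square \<open>h\<close>, and \<open>h = -4 lc(C)\<close>.\<close>
  have "unusual (disc (A, B, C))" using iu D AC by (simp add: imaginary_def)
  hence "lead_coeff (disc (A, B, C)) \<noteq> 1" unfolding unusual_def by (metis one_neq_zero power_one)
  hence hD: "lead_coeff (disc (A, B, C)) = h" using lD by simp
  hence "h \<noteq> 0" using dD by auto
  moreover have "h = - 4 * lead_coeff C" using hD D lA by (metis mult_1)
  ultimately have "(- 4 / h) * lead_coeff C = 1" by (simp add: field_simps)
  thus ?thesis using AC lA dD D by simp
qed

theorem mainTheorem7:
  fixes h :: "'a::{field_gcd,finite}"
    and A B C :: "'a poly"
  assumes q: "coprime (card (UNIV :: 'a set)) (6::nat)"
    and h: "primitive_root h"
    and st: "standing h (A, B, C)"
    and pr: "partially_reduced h (A, B, C)"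
    and iu: "imaginary (disc (A, B, C)) \<or> unusual (disc (A, B, C))"
  shows
   "(\<forall>M. inGL2 M \<and> form_comp (A, B, C) M = (A, B, C) \<longrightarrow> pabs A < pabs C \<longrightarrow>
        M = (1, 0, 0, 1) \<or> M = (-1, 0, 0, -1) \<or>
        ((M = (1, 0, 0, -1) \<or> M = (-1, 0, 0, 1)) \<and> B = 0))
  \<and> (\<forall>M. inGL2 M \<and> form_comp (A, B, C) M = (A, B, C) \<longrightarrow> pabs A = pabs C \<longrightarrow>
        (\<exists>\<alpha> \<beta> u. (u = 1 \<or> u = -1) \<and> mdet M = [:u:] \<and>
           M = ([:\<alpha>:], [:\<beta>:], [:- u * (-4 / h) * \<beta>:], [:u * \<alpha>:]) \<and>
           (\<beta> \<noteq> 0 \<longrightarrow> B \<noteq> 0 \<and> smult \<alpha> B = smult (u * \<beta>) (smult (-4 / h) C - A))))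
  \<and> (pabs A = pabs C \<longrightarrow>
       (let Aut = {M. inGL2 M \<and> form_comp (A, B, C) M = (A, B, C) \<and> fst (snd M) \<noteq> 0} in
         (Aut \<noteq> {} \<longleftrightarrow>
            B \<noteq> 0 \<and> (\<exists>c. smult (-4 / h) C - A = smult c B \<and>
                           (\<exists>s. s \<noteq> 0 \<and> c^2 + (-4 / h) = s^2)))
         \<and> (Aut \<noteq> {} \<longrightarrow> card Aut = 2)))"
proof -
  have two: "(2::'a) \<noteq> 0" by (rule two_neq_zero_if_coprime_card_6[OF q])
  have f: "leading_anisotropic (A, B, C)" by (rule partially_reduced_leading_anisotropic[OF two pr iu])
  have prim: "gcd A (gcd B C) = 1" using st by (simp add: standing_def primitive_form_def)
  note normal = equal_size_normalization[OF two st f pr iu]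
  let "?unequal \<and> ?equal \<and> ?count" = ?thesis
  have "A \<noteq> 0" using f by (simp add: leading_anisotropic_def)
  hence ?unequal
    using automorphisms_unequal_degrees[OF f _ two] pabs_less_iff[of A C] by blast
  moreover have ?equal
    using automorphisms_equal_degrees[OF f _ two _ _ prim] normal by blast
  moreover have ?count
    using reflection_automorphisms_count[OF f _ two _ _ prim] normal by blast
  ultimately show ?thesis by blast
qed

end
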